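(* For any VarianceReduction algorithm (possibly using shared randomness) in which any machine receives at most $b$ bits in expectation, there is a valid input distribution for which $\mathbb{E}[\|\mathbf{EST}-\boldsymbol\nabla\|^2]=\Omega\!\left(\sigma^2\,2^{-3b/d}\right)$.
   Context: VarianceReduction: there are $n$ machines and an unknown true vector $\boldsymbol\nabla\in\mathbb{R}^d$. Each machine $v$ receives an independent random input $\mathbf{x}_v$ with $\mathbb{E}[\mathbf{x}_v]=\boldsymbol\nabla$ and $\mathbb{E}[\|\mathbf{x}_v-\boldsymbol\nabla\|^2]\le\sigma^2$, $\sigma$ known. All machines must output the same $\mathbf{EST}\in\mathbb{R}^d$ with $\mathbb{E}[\mathbf{EST}]=\boldsymbol\nabla$. $\|\cdot\|$ is a fixed one of the $\ell_1,\ell_2,\ell_\infty$ norms. Algorithms may use a common random string. Bits received by a machine count all bits it receives from any source. The hidden constant is absolute. *)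

theory Defs
  imports "HOL-Probability.Probability"
begin

text \<open>Vectors in R^d are functions nat => real; only coordinates i < d matter.\<close>

datatype normkind = L1 | L2 | Linf

definition vnorm :: "normkind \<Rightarrow> nat \<Rightarrow> (nat \<Rightarrow> real) \<Rightarrow> real" where
  "vnorm p d x = (case p of
      L1 \<Rightarrow> (\<Sum>i<d. \<bar>x i\<bar>)
    | L2 \<Rightarrow> sqrt (\<Sum>i<d. (x i)\<^sup>2)
    | Linf \<Rightarrow> Max ((\<lambda>i. \<bar>x i\<bar>) ` {..<d}))"

definition vec_space :: "nat \<Rightarrow> (nat \<Rightarrow> real) measure" where
  "vec_space d = PiM {..<d} (\<lambda>_. borel)"

definition inputs_space :: "nat \<Rightarrow> nat \<Rightarrow> (nat \<Rightarrow> nat \<Rightarrow> real) measure" where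
  "inputs_space d n = PiM {..<n} (\<lambda>_. vec_space d)"

text \<open>The common random string: infinitely many independent fair coins.\<close>
definition coins :: "(nat \<Rightarrow> bool) measure" where
  "coins = PiM UNIV (\<lambda>_. measure_pmf (bernoulli_pmf (1/2)))"

definition joint :: "nat \<Rightarrow> (nat \<Rightarrow> (nat \<Rightarrow> real) measure)
    \<Rightarrow> ((nat \<Rightarrow> nat \<Rightarrow> real) \<times> (nat \<Rightarrow> bool)) measure" where
  "joint n D = PiM {..<n} D \<Otimes>\<^sub>M coins"

definition valid_input :: "normkind \<Rightarrow> nat \<Rightarrow> nat \<Rightarrow> real \<Rightarrow> (nat \<Rightarrow> real)
    \<Rightarrow> (nat \<Rightarrow> (nat \<Rightarrow> real) measure) \<Rightarrow> bool" where
  "valid_input p d n \<sigma> g D \<longleftrightarrow>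
     (\<forall>v<n. prob_space (D v) \<and> sets (D v) = sets (vec_space d) \<and>
        (\<forall>i<d. integrable (D v) (\<lambda>x. x i) \<and> (\<integral>x. x i \<partial>D v) = g i) \<and>
        (\<integral>\<^sup>+x. ennreal ((vnorm p d (\<lambda>i. x i - g i))\<^sup>2) \<partial>D v) \<le> ennreal (\<sigma>\<^sup>2))"

definition unbiased :: "normkind \<Rightarrow> nat \<Rightarrow> nat \<Rightarrow> real
    \<Rightarrow> ((nat \<Rightarrow> nat \<Rightarrow> real) \<Rightarrow> (nat \<Rightarrow> bool) \<Rightarrow> nat \<Rightarrow> real) \<Rightarrow> bool" where
  "unbiased p d n \<sigma> EST \<longleftrightarrow>
     (\<forall>g D. valid_input p d n \<sigma> g D \<longrightarrow>
        (\<forall>i<d. integrable (joint n D) (\<lambda>z. EST (fst z) (snd z) i) \<and>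
               (\<integral>z. EST (fst z) (snd z) i \<partial>joint n D) = g i))"

text \<open>Every machine v outputs EST, computed from its own input, the shared random
  string and the bits Msg v it receives (from any source).\<close>
definition local_view :: "nat \<Rightarrow> nat
    \<Rightarrow> ((nat \<Rightarrow> nat \<Rightarrow> real) \<Rightarrow> (nat \<Rightarrow> bool) \<Rightarrow> nat \<Rightarrow> real)
    \<Rightarrow> (nat \<Rightarrow> (nat \<Rightarrow> nat \<Rightarrow> real) \<Rightarrow> (nat \<Rightarrow> bool) \<Rightarrow> bool list)
    \<Rightarrow> (nat \<Rightarrow> (nat \<Rightarrow> real) \<Rightarrow> (nat \<Rightarrow> bool) \<Rightarrow> bool list \<Rightarrow> nat \<Rightarrow> real) \<Rightarrow> bool" where
  "local_view d n EST Msg Out \<longleftrightarrow>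
     (\<forall>v<n. \<forall>x\<in>space (inputs_space d n). \<forall>\<omega>. \<forall>i<d.
        EST x \<omega> i = Out v (x v) \<omega> (Msg v x \<omega>) i)"

definition bits_bound :: "normkind \<Rightarrow> nat \<Rightarrow> nat \<Rightarrow> real \<Rightarrow> real
    \<Rightarrow> (nat \<Rightarrow> (nat \<Rightarrow> nat \<Rightarrow> real) \<Rightarrow> (nat \<Rightarrow> bool) \<Rightarrow> bool list) \<Rightarrow> bool" where
  "bits_bound p d n \<sigma> b Msg \<longleftrightarrow>
     (\<forall>v<n. (\<lambda>z. Msg v (fst z) (snd z))
              \<in> measurable (inputs_space d n \<Otimes>\<^sub>M coins) (count_space UNIV)) \<and>
     (\<forall>g D. valid_input p d n \<sigma> g D \<longrightarrow>
        (\<forall>v<n. (\<integral>\<^sup>+z. of_nat (length (Msg v (fst z) (snd z))) \<partial>joint n D) \<le> ennreal b))"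

end

theory Submission
  imports Defs
begin

text \<open>
  Lower bound by packing. Fix a grid spacing \<open>s\<close> and a box radius \<open>m\<close>. For each point \<open>k\<close> of
  the grid \<open>{0,...,N-1}\<^sup>d\<close> there is a valid input distribution with true vector \<open>s k\<close>:
  machine 0 receives \<open>s t\<close> for \<open>t\<close> uniform in the integer box of radius \<open>m\<close> around \<open>k\<close>, all
  other machines receive \<open>s k\<close>. If the expected squared error were below
  \<open>c \<sigma>\<^sup>2 2\<^bsup>-3b/d\<^esup>\<close> on every such instance, Markov's inequality would give, in each
  instance, probability more than 1/6 that machine 0 receives at most \<open>L \<approx> 3b/2\<close> bits and
  outputs a point within distance \<open>r\<close> of \<open>s k\<close>. But machine 0's output is a function of its
  input, the shared coins and its message: for fixed coins there are at most \<open>2\<^bsup>L+1\<^esup>\<close> short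
  messages per input, and an \<open>r\<close>-ball contains at most \<open>C\<close> grid points, so double counting
  bounds the sum of these probabilities over all \<open>k\<close> by \<open>(N+2m)\<^sup>d 2\<^bsup>L+1\<^esup> C / (2m+1)\<^sup>d\<close>,
  which the choice of parameters makes at most \<open>N\<^sup>d/6\<close>.
\<close>

section \<open>Comparing the norms with the box and with \<open>\<ell>\<^sub>1\<close>\<close>

definition ones_norm :: "normkind \<Rightarrow> nat \<Rightarrow> real" where
  "ones_norm p d = (case p of L1 \<Rightarrow> real d | L2 \<Rightarrow> sqrt (real d) | Linf \<Rightarrow> 1)"

definition l1_factor :: "normkind \<Rightarrow> nat \<Rightarrow> real" where
  "l1_factor p d = (case p of L1 \<Rightarrow> 1 | L2 \<Rightarrow> sqrt (real d) | Linf \<Rightarrow> real d)"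

lemma ones_norm_mult_l1_factor: "ones_norm p d * l1_factor p d = real d"
  by (cases p) (auto simp: ones_norm_def l1_factor_def)

lemma ones_norm_pos: "d \<ge> 1 \<Longrightarrow> ones_norm p d > 0"
  by (cases p) (auto simp: ones_norm_def)

lemma l1_factor_pos: "d \<ge> 1 \<Longrightarrow> l1_factor p d > 0"
  by (cases p) (auto simp: l1_factor_def)

lemma vnorm_cong: "(\<And>i. i < d \<Longrightarrow> w i = w' i) \<Longrightarrow> vnorm p d w = vnorm p d w'"
  unfolding vnorm_def by (cases p) (auto intro!: sum.cong arg_cong[where f = Max] image_cong)

lemma vnorm_nonneg: "d \<ge> 1 \<Longrightarrow> vnorm p d w \<ge> 0"
  by (cases p) (auto simp: vnorm_def Max_ge_iff lessThan_empty_iff intro!: sum_nonneg exI[of _ 0])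

lemma borel_measurable_vnorm [measurable]:
  assumes "\<And>i. i < d \<Longrightarrow> f i \<in> borel_measurable M"
  shows "(\<lambda>z. vnorm p d (\<lambda>i. f i z)) \<in> borel_measurable M"
  using assms by (cases p) (auto simp: vnorm_def intro!: borel_measurable_Max)

lemma sum_abs_le_l1_factor_vnorm:
  assumes "d \<ge> 1"
  shows "(\<Sum>i<d. \<bar>w i\<bar>) \<le> l1_factor p d * vnorm p d w"
proof (cases p)
  case L1
  then show ?thesis by (simp add: vnorm_def l1_factor_def)
next
  case L2
  have "(\<Sum>i<d. \<bar>w i\<bar>)\<^sup>2 \<le> (\<Sum>i<d. \<bar>w i\<bar>\<^sup>2) * card {..<d}"
    by (rule sum_squared_le_sum_of_squares)
  then have "(\<Sum>i<d. \<bar>w i\<bar>) \<le> sqrt (real d * (\<Sum>i<d. (w i)\<^sup>2))"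
    by (simp add: real_le_rsqrt mult.commute)
  then show ?thesis using L2 by (simp add: vnorm_def l1_factor_def real_sqrt_mult)
next
  case Linf
  have "(\<Sum>i<d. \<bar>w i\<bar>) \<le> (\<Sum>i<d. Max ((\<lambda>i. \<bar>w i\<bar>) ` {..<d}))"
    by (intro sum_mono Max_ge) auto
  then show ?thesis using Linf by (simp add: vnorm_def l1_factor_def)
qed

lemma vnorm_le_ones_norm:
  assumes "d \<ge> 1" and "\<And>i. i < d \<Longrightarrow> \<bar>w i\<bar> \<le> c"
  shows "vnorm p d w \<le> ones_norm p d * c"
proof (cases p)
  case L1
  have "(\<Sum>i<d. \<bar>w i\<bar>) \<le> (\<Sum>i<d. c)" by (intro sum_mono assms) auto
  then show ?thesis using L1 by (simp add: vnorm_def ones_norm_def)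
next
  case L2
  have c: "c \<ge> 0" using assms(2)[of 0] assms(1) by linarith
  have "(\<Sum>i<d. (w i)\<^sup>2) \<le> (\<Sum>i<d. c\<^sup>2)"
    using assms(2) by (intro sum_mono) (simp add: abs_le_square_iff[symmetric] c)
  then have "sqrt (\<Sum>i<d. (w i)\<^sup>2) \<le> sqrt (real d * c\<^sup>2)" by simp
  then show ?thesis using L2 c by (simp add: vnorm_def ones_norm_def real_sqrt_mult)
next
  case Linf
  then show ?thesis using assms by (simp add: vnorm_def ones_norm_def lessThan_empty_iff)
qed

section \<open>Grid points in a ball\<close>

lemma sum_le_geometric_bound:
  fixes f :: "'a \<Rightarrow> real"
  assumes "finite F" "inj_on h F" "\<And>k. k \<in> F \<Longrightarrow> f k \<le> q ^ h k" "0 \<le> q" "q < 1"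
  shows "sum f F \<le> 1 / (1 - q)"
proof -
  have "sum f F \<le> (\<Sum>k\<in>F. q ^ h k)" by (intro sum_mono assms)
  also have "\<dots> = (\<Sum>j\<in>h ` F. q ^ j)" using assms(2) by (simp add: sum.reindex)
  also have "\<dots> \<le> (\<Sum>j. q ^ j)"
    using assms by (intro sum_le_suminf summable_geometric) auto
  also have "\<dots> = 1 / (1 - q)" using assms by (simp add: suminf_geometric)
  finally show ?thesis .
qed

lemma sum_exp_neg_dist_int_le:
  fixes F :: "int set" and b t :: real
  assumes "finite F" "t > 0"
  shows "(\<Sum>k\<in>F. exp (- t * \<bar>b - of_int k\<bar>)) \<le> 2 / (1 - exp (- t))"
proof -
  define q where "q = exp (- t)"
  have q: "0 \<le> q" "q < 1" using assms(2) by (simp_all add: q_def)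
  have q_power: "q ^ j = exp (- t * real j)" for j
    by (simp add: q_def exp_of_nat_mult[symmetric] mult.commute)
  define F1 where "F1 = {k\<in>F. \<lceil>b\<rceil> \<le> k}"
  define F2 where "F2 = {k\<in>F. k < \<lceil>b\<rceil>}"
  have above: "(\<Sum>k\<in>F1. exp (- t * \<bar>b - of_int k\<bar>)) \<le> 1 / (1 - q)"
  proof (rule sum_le_geometric_bound[where h = "\<lambda>k. nat (k - \<lceil>b\<rceil>)"])
    fix k assume "k \<in> F1"
    then have "real (nat (k - \<lceil>b\<rceil>)) \<le> \<bar>b - of_int k\<bar>"
      unfolding F1_def by linarith
    then show "exp (- t * \<bar>b - of_int k\<bar>) \<le> q ^ nat (k - \<lceil>b\<rceil>)"
      using assms(2) by (simp add: q_power)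
  qed (use assms(1) q in \<open>auto simp: F1_def inj_on_def\<close>)
  have below: "(\<Sum>k\<in>F2. exp (- t * \<bar>b - of_int k\<bar>)) \<le> 1 / (1 - q)"
  proof (rule sum_le_geometric_bound[where h = "\<lambda>k. nat (\<lceil>b\<rceil> - 1 - k)"])
    fix k assume "k \<in> F2"
    then have "real (nat (\<lceil>b\<rceil> - 1 - k)) \<le> \<bar>b - of_int k\<bar>"
      unfolding F2_def by linarith
    then show "exp (- t * \<bar>b - of_int k\<bar>) \<le> q ^ nat (\<lceil>b\<rceil> - 1 - k)"
      using assms(2) by (simp add: q_power)
  qed (use assms(1) q in \<open>auto simp: F2_def inj_on_def\<close>)
  have "F = F1 \<union> F2" "F1 \<inter> F2 = {}" by (auto simp: F1_def F2_def)
  then have "(\<Sum>k\<in>F. exp (- t * \<bar>b - of_int k\<bar>))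
      = (\<Sum>k\<in>F1. exp (- t * \<bar>b - of_int k\<bar>)) + (\<Sum>k\<in>F2. exp (- t * \<bar>b - of_int k\<bar>))"
    using assms(1) by (simp add: sum.union_disjoint)
  with above below show ?thesis by (simp add: q_def)
qed

lemma inverse_one_minus_exp_neg_le:
  fixes x :: real
  assumes "x > 0"
  shows "1 / (1 - exp (- x)) \<le> 1 + 1 / x"
proof -
  have "x + 1 \<le> exp x"
    using exp_ge_add_one_self[of x] by linarith
  then have "x \<le> (x + 1) * (1 - exp (- x))" by (simp add: exp_minus field_simps)
  moreover have "exp (- x) < 1" using assms by simp
  ultimately show ?thesis using assms by (simp add: field_simps)
qed

text \<open>Counting lattice points in an \<open>\<ell>\<^sub>1\<close> ball by comparing the indicator with the
  weight \<open>exp (t (R - \<Sum>\<^sub>i \<bar>b\<^sub>i - k\<^sub>i\<bar>))\<close>, which factorises over the coordinates; \<open>t = d / R\<close>.\<close>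

lemma card_grid_l1_ball_le:
  fixes F :: "int set"
  assumes "finite F" "d \<ge> 1" "R > 0"
  shows "real (card {k \<in> PiE {..<d} (\<lambda>_. F). (\<Sum>i<d. \<bar>b i - of_int (k i)\<bar>) < R})
         \<le> (2 * exp 1 * (1 + R / real d)) ^ d"
proof -
  define t where "t = real d / R"
  have t: "t > 0" using assms by (simp add: t_def)
  define K where "K = PiE {..<d} (\<lambda>_. F)"
  define w where "w k = exp (t * (R - (\<Sum>i<d. \<bar>b i - of_int (k i)\<bar>)))" for k :: "nat \<Rightarrow> int"
  have w_prod: "w k = exp (t * R) * (\<Prod>i<d. exp (- t * \<bar>b i - of_int (k i)\<bar>))" for k
    by (simp add: w_def right_diff_distrib sum_distrib_left exp_diff exp_sum exp_minus
        prod_inversef[symmetric] divide_inverse)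
  have "real (card {k \<in> K. (\<Sum>i<d. \<bar>b i - of_int (k i)\<bar>) < R}) = (\<Sum>k | k \<in> K \<and> (\<Sum>i<d. \<bar>b i - of_int (k i)\<bar>) < R. 1)"
    by simp
  also have "\<dots> \<le> (\<Sum>k | k \<in> K \<and> (\<Sum>i<d. \<bar>b i - of_int (k i)\<bar>) < R. w k)"
    using t by (intro sum_mono) (simp add: w_def)
  also have "\<dots> \<le> (\<Sum>k\<in>K. w k)"
    using assms(1) by (intro sum_mono2) (auto simp: K_def finite_PiE w_def)
  also have "\<dots> = exp (t * R) * (\<Prod>i<d. \<Sum>x\<in>F. exp (- t * \<bar>b i - of_int x\<bar>))"
    by (simp add: w_prod K_def sum_distrib_left[symmetric] prod_sum_PiE assms(1))
  also have "\<dots> \<le> exp (t * R) * (\<Prod>i<d. 2 / (1 - exp (- t)))"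
    using t assms(1) by (intro mult_left_mono prod_mono conjI sum_exp_neg_dist_int_le sum_nonneg) auto
  also have "\<dots> = exp (real d) * (2 / (1 - exp (- t))) ^ d"
    using assms by (simp add: t_def)
  also have "\<dots> \<le> exp (real d) * (2 * (1 + R / real d)) ^ d"
    using inverse_one_minus_exp_neg_le[OF t] assms
    by (intro mult_left_mono power_mono) (auto simp: t_def field_simps)
  also have "\<dots> = (2 * exp 1 * (1 + R / real d)) ^ d"
    by (simp add: exp_of_nat_mult[of d 1, symmetric] power_mult_distrib mult_ac)
  finally show ?thesis by (simp add: K_def)
qed

definition grid_vec :: "nat \<Rightarrow> real \<Rightarrow> (nat \<Rightarrow> int) \<Rightarrow> nat \<Rightarrow> real" where
  "grid_vec d s k = (\<lambda>i\<in>{..<d}. s * of_int (k i))"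

lemma card_grid_vnorm_ball_le:
  fixes F :: "int set"
  assumes "finite F" "d \<ge> 1" "s > 0" "r > 0"
  shows "real (card {k \<in> PiE {..<d} (\<lambda>_. F). vnorm p d (\<lambda>i. a i - grid_vec d s k i) < r})
         \<le> (2 * exp 1 * (1 + l1_factor p d * r / (s * real d))) ^ d"
proof -
  define R where "R = l1_factor p d * r / s"
  have R: "R > 0" using assms l1_factor_pos[of d p] by (simp add: R_def)
  have "(\<Sum>i<d. \<bar>a i / s - of_int (k i)\<bar>) < R"
    if "vnorm p d (\<lambda>i. a i - grid_vec d s k i) < r" for k
  proof -
    have "s * (\<Sum>i<d. \<bar>a i / s - of_int (k i)\<bar>) = (\<Sum>i<d. \<bar>a i - grid_vec d s k i\<bar>)"
      using assms(3) by (simp add: sum_distrib_left grid_vec_def abs_mult[symmetric] field_simps)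
    also have "\<dots> \<le> l1_factor p d * vnorm p d (\<lambda>i. a i - grid_vec d s k i)"
      by (rule sum_abs_le_l1_factor_vnorm[OF assms(2)])
    also have "\<dots> < l1_factor p d * r"
      using that l1_factor_pos[OF assms(2)] by simp
    finally show ?thesis using assms(3) by (simp add: R_def field_simps)
  qed
  then have "card {k \<in> PiE {..<d} (\<lambda>_. F). vnorm p d (\<lambda>i. a i - grid_vec d s k i) < r}
      \<le> card {k \<in> PiE {..<d} (\<lambda>_. F). (\<Sum>i<d. \<bar>a i / s - of_int (k i)\<bar>) < R}"
    using assms(1) by (intro card_mono) (auto simp: finite_PiE)
  also have "real \<dots> \<le> (2 * exp 1 * (1 + R / real d)) ^ d"
    by (rule card_grid_l1_ball_le[OF assms(1,2) R])
  finally show ?thesis by (simp add: R_def)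
qed

section \<open>The hard input distributions\<close>

definition int_box :: "nat \<Rightarrow> (nat \<Rightarrow> int) \<Rightarrow> nat \<Rightarrow> (nat \<Rightarrow> int) set" where
  "int_box d k m = PiE {..<d} (\<lambda>i. {k i - int m..k i + int m})"

lemma finite_int_box [simp]: "finite (int_box d k m)"
  by (simp add: int_box_def finite_PiE)

lemma int_box_nonempty [simp]: "int_box d k m \<noteq> {}"
  by (simp add: int_box_def PiE_eq_empty_iff)

lemma card_int_box: "card (int_box d k m) = (2 * m + 1) ^ d"
proof -
  have "card {k i - int m..k i + int m} = 2 * m + 1" for i by simp
  then show ?thesis by (simp add: int_box_def card_PiE)
qed

lemma int_box_zero: "int_box d k 0 = {restrict k {..<d}}"
  by (simp add: int_box_def PiE_eq_singleton)

lemma sum_int_box_coordinate: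
  assumes "i < d"
  shows "(\<Sum>t\<in>int_box d k m. of_int (t i)) = real (card (int_box d k m)) * of_int (k i)"
proof -
  define refl where "refl t = (\<lambda>j\<in>{..<d}. 2 * k j - t j)" for t :: "nat \<Rightarrow> int"
  have refl_box: "refl t \<in> int_box d k m" if "t \<in> int_box d k m" for t
    using that unfolding int_box_def refl_def PiE_iff by (auto dest!: bspec)
  have refl_refl: "refl (refl t) = t" if "t \<in> int_box d k m" for t
    using that by (auto simp: int_box_def refl_def PiE_iff extensional_def fun_eq_iff)
  have "(\<Sum>t\<in>int_box d k m. of_int (t i) - of_int (k i) :: real)
      = (\<Sum>t\<in>int_box d k m. of_int (refl t i) - of_int (k i))"
    by (rule sum.reindex_bij_witness[of _ refl refl]) (use refl_box refl_refl in auto)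
  also have "\<dots> = - (\<Sum>t\<in>int_box d k m. of_int (t i) - of_int (k i))"
    using assms by (simp add: refl_def sum_negf[symmetric] algebra_simps)
  finally show ?thesis by (simp add: sum_subtractf)
qed

lemma grid_vec_in_space [simp]: "grid_vec d s k \<in> space (vec_space d)"
  by (simp add: vec_space_def space_PiM grid_vec_def)

lemma grid_vec_restrict: "grid_vec d s (restrict k {..<d}) = grid_vec d s k"
  by (simp add: grid_vec_def fun_eq_iff)

lemma vnorm_grid_vec_diff_le:
  assumes "d \<ge> 1" "0 \<le> s" "t \<in> int_box d k m"
  shows "vnorm p d (\<lambda>i. grid_vec d s t i - grid_vec d s k i) \<le> ones_norm p d * s * m"
proof -
  have "\<bar>grid_vec d s t i - grid_vec d s k i\<bar> \<le> s * m" if "i < d" for i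
  proof -
    have "k i - int m \<le> t i" "t i \<le> k i + int m"
      using assms(3) that by (auto simp: int_box_def PiE_iff)
    then have "\<bar>of_int (t i) - of_int (k i)\<bar> \<le> real m"
      by linarith
    moreover have "grid_vec d s t i - grid_vec d s k i = s * (of_int (t i) - of_int (k i))"
      using that by (simp add: grid_vec_def right_diff_distrib)
    ultimately show ?thesis
      using assms(2) by (simp add: abs_mult mult_left_mono)
  qed
  then show ?thesis
    using vnorm_le_ones_norm[OF assms(1)] by (simp add: mult.assoc)
qed

definition admissible_law :: "normkind \<Rightarrow> nat \<Rightarrow> real \<Rightarrow> (nat \<Rightarrow> real)
    \<Rightarrow> (nat \<Rightarrow> real) measure \<Rightarrow> bool" where
  "admissible_law p d \<sigma> g M \<longleftrightarrow> prob_space M \<and> sets M = sets (vec_space d) \<and>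
     (\<forall>i<d. integrable M (\<lambda>x. x i) \<and> (\<integral>x. x i \<partial>M) = g i) \<and>
     (\<integral>\<^sup>+x. ennreal ((vnorm p d (\<lambda>i. x i - g i))\<^sup>2) \<partial>M) \<le> ennreal (\<sigma>\<^sup>2)"

lemma valid_input_iff_admissible_law:
  "valid_input p d n \<sigma> g D \<longleftrightarrow> (\<forall>v<n. admissible_law p d \<sigma> g (D v))"
  by (simp add: valid_input_def admissible_law_def)

lemma admissible_law_uniform_int_box:
  assumes "d \<ge> 1" "0 \<le> s" "ones_norm p d * s * m \<le> \<sigma>"
  shows "admissible_law p d \<sigma> (grid_vec d s k)
           (distr (measure_pmf (pmf_of_set (int_box d k m))) (vec_space d) (grid_vec d s))"
    (is "admissible_law _ _ _ _ ?M")
proof -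
  let ?W = "int_box d k m"
  have coord [measurable]: "(\<lambda>x. x i) \<in> borel_measurable (vec_space d)" if "i < d" for i
    using that unfolding vec_space_def by (intro measurable_component_singleton) auto
  have mean: "(\<integral>x. x i \<partial>?M) = grid_vec d s k i" if "i < d" for i
  proof -
    have "(\<integral>x. x i \<partial>?M) = (\<integral>t. grid_vec d s t i \<partial>measure_pmf (pmf_of_set ?W))"
      using that by (intro integral_distr) simp_all
    also have "\<dots> = s * (\<Sum>t\<in>?W. of_int (t i)) / card ?W"
      using that by (simp add: integral_pmf_of_set grid_vec_def sum_distrib_left)
    also have "\<dots> = grid_vec d s k i"
      using that by (simp add: sum_int_box_coordinate grid_vec_def)
    finally show ?thesis .
  qed
  have close: "(vnorm p d (\<lambda>i. grid_vec d s t i - grid_vec d s k i))\<^sup>2 \<le> \<sigma>\<^sup>2" if "t \<in> ?W" for t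
    using order.trans[OF vnorm_grid_vec_diff_le[OF assms(1,2) that] assms(3)] vnorm_nonneg[OF assms(1)]
    by (intro power_mono) auto
  have "(\<integral>\<^sup>+x. ennreal ((vnorm p d (\<lambda>i. x i - grid_vec d s k i))\<^sup>2) \<partial>?M)
      = (\<integral>\<^sup>+t. ennreal ((vnorm p d (\<lambda>i. grid_vec d s t i - grid_vec d s k i))\<^sup>2) \<partial>measure_pmf (pmf_of_set ?W))"
    by (simp add: nn_integral_distr)
  also have "\<dots> \<le> (\<integral>\<^sup>+t. ennreal (\<sigma>\<^sup>2) \<partial>measure_pmf (pmf_of_set ?W))"
    by (intro nn_integral_mono_AE) (simp add: AE_measure_pmf_iff close)
  finally have "(\<integral>\<^sup>+x. ennreal ((vnorm p d (\<lambda>i. x i - grid_vec d s k i))\<^sup>2) \<partial>?M) \<le> ennreal (\<sigma>\<^sup>2)"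
    by simp
  moreover have "integrable ?M (\<lambda>x. x i)" if "i < d" for i
    using that by (simp add: integrable_distr_eq integrable_measure_pmf_finite)
  moreover have "prob_space ?M"
    by (simp add: prob_space.prob_space_distr prob_space_measure_pmf)
  ultimately show ?thesis
    by (simp add: admissible_law_def mean)
qed

definition hard_input :: "nat \<Rightarrow> real \<Rightarrow> nat \<Rightarrow> (nat \<Rightarrow> int) \<Rightarrow> nat \<Rightarrow> (nat \<Rightarrow> real) measure" where
  "hard_input d s m k v =
     distr (measure_pmf (pmf_of_set (int_box d k (if v = 0 then m else 0)))) (vec_space d) (grid_vec d s)"

lemma valid_input_hard_input:
  assumes "d \<ge> 1" "0 \<le> s" "ones_norm p d * s * m \<le> \<sigma>"
  shows "valid_input p d n \<sigma> (grid_vec d s k) (hard_input d s m k)"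
  unfolding valid_input_iff_admissible_law hard_input_def
  using assms ones_norm_pos[OF assms(1), of p]
  by (auto intro!: admissible_law_uniform_int_box order.trans[OF _ assms(3)])

lemma hard_input_nonzero:
  "v \<noteq> 0 \<Longrightarrow> hard_input d s m k v = return (vec_space d) (grid_vec d s k)"
  by (simp add: hard_input_def int_box_zero pmf_of_set_singleton return_pmf.rep_eq distr_return grid_vec_restrict)

lemma prob_space_coins: "prob_space coins"
  unfolding coins_def by (intro prob_space_PiM prob_space_measure_pmf)

lemma sets_joint_hard_input: "sets (joint n (hard_input d s m k)) = sets (inputs_space d n \<Otimes>\<^sub>M coins)"
  unfolding joint_def inputs_space_def
  by (intro sets_pair_measure_cong sets_PiM_cong) (simp_all add: hard_input_def)

lemma prob_space_joint_hard_input: "prob_space (joint n (hard_input d s m k))"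
  unfolding joint_def hard_input_def
  by (intro prob_space_pair prob_space_PiM prob_space_coins prob_space.prob_space_distr prob_space_measure_pmf)
    simp

definition input_profile :: "nat \<Rightarrow> 'a \<Rightarrow> 'a \<Rightarrow> nat \<Rightarrow> 'a" where
  "input_profile n x y = (\<lambda>v\<in>{..<n}. if v = 0 then x else y)"

lemma nn_integral_return_singleton:
  assumes "x \<in> space M" "{x} \<in> sets M"
  shows "(\<integral>\<^sup>+y. h y \<partial>return M x) = h x"
proof -
  have "{y \<in> space M. y = x} = {x}"
    using assms(1) by auto
  then have "AE y in return M x. y = x"
    using AE_return[OF assms(1)] assms(2) by (simp add: pred_def)
  then have "(\<integral>\<^sup>+y. h y \<partial>return M x) = (\<integral>\<^sup>+y. h x \<partial>return M x)"
    by (intro nn_integral_cong_AE) (auto elim!: eventually_mono)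
  then show ?thesis
    using prob_space.emeasure_space_1[OF prob_space_return[OF assms(1)]] by simp
qed

lemma singleton_sets_PiM:
  assumes "finite I" "x \<in> extensional I" "\<And>i. i \<in> I \<Longrightarrow> {x i} \<in> sets (M i)"
  shows "{x} \<in> sets (PiM I M)"
proof -
  have "PiE I (\<lambda>i. {x i}) \<in> sets (PiM I M)"
    using assms(1,3) by (intro sets_PiM_I_finite) auto
  then show ?thesis
    using PiE_singleton[OF assms(2)] by simp
qed

lemma nn_integral_PiM_return_except_zero:
  fixes D :: "nat \<Rightarrow> 'a measure"
  assumes "n \<ge> 1" "prob_space (D 0)" "y \<in> space M" "{y} \<in> sets M"
    and D: "\<And>v. v \<noteq> 0 \<Longrightarrow> D v = return M y"
    and F: "F \<in> borel_measurable (PiM {..<n} D)"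
  shows "(\<integral>\<^sup>+x. F x \<partial>PiM {..<n} D) = (\<integral>\<^sup>+a. F (input_profile n a y) \<partial>D 0)"
proof -
  interpret product_sigma_finite D
    using assms(2,3) D prob_space_return
    by (metis prob_space_imp_sigma_finite product_sigma_finite.intro)
  let ?others = "restrict (\<lambda>_. y) {1..<n}"
  have n: "{..<n} = insert 0 {1..<n}"
    using assms(1) by auto
  have "PiM {1..<n} D = PiM {1..<n} (\<lambda>_. return M y)"
    using D by (intro PiM_cong) auto
  also have "\<dots> = return (PiM {1..<n} (\<lambda>_. M)) ?others"
    using assms(4) by (simp add: PiM_return)
  finally have others: "PiM {1..<n} D = return (PiM {1..<n} (\<lambda>_. M)) ?others" .
  have "?others \<in> space (PiM {1..<n} (\<lambda>_. M))"
    using assms(3) by (simp add: space_PiM)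
  moreover have "{?others} \<in> sets (PiM {1..<n} (\<lambda>_. M))"
    using assms(4) by (intro singleton_sets_PiM) auto
  moreover have "(\<integral>\<^sup>+x. F x \<partial>PiM {..<n} D) = (\<integral>\<^sup>+x. (\<integral>\<^sup>+a. F (x(0 := a)) \<partial>D 0) \<partial>PiM {1..<n} D)"
    using F unfolding n by (intro product_nn_integral_insert) auto
  moreover have "?others(0 := a) = input_profile n a y" for a
    using assms(1) by (auto simp: input_profile_def fun_eq_iff)
  ultimately show ?thesis
    unfolding others by (simp add: nn_integral_return_singleton)
qed

lemma nn_integral_joint_hard_input:
  assumes "n \<ge> 1" and F: "F \<in> borel_measurable (inputs_space d n \<Otimes>\<^sub>M coins)"
  shows "(\<integral>\<^sup>+z. F z \<partial>joint n (hard_input d s m k))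
    = (\<Sum>t\<in>int_box d k m. \<integral>\<^sup>+\<omega>. F (input_profile n (grid_vec d s t) (grid_vec d s k), \<omega>) \<partial>coins)
        / card (int_box d k m)"
proof -
  interpret coins: prob_space coins by (rule prob_space_coins)
  let ?D = "hard_input d s m k"
  let ?G = "\<lambda>x. \<integral>\<^sup>+\<omega>. F (x, \<omega>) \<partial>coins"
  have sets_D: "sets (PiM {..<n} ?D) = sets (inputs_space d n)"
    unfolding inputs_space_def by (intro sets_PiM_cong) (auto simp: hard_input_def)
  have F': "F \<in> borel_measurable (PiM {..<n} ?D \<Otimes>\<^sub>M coins)"
    using F by (simp add: measurable_cong_sets[OF sets_pair_measure_cong[OF sets_D refl] refl])
  have G: "?G \<in> borel_measurable (PiM {..<n} ?D)"
    by (rule coins.borel_measurable_nn_integral_fst[OF F'])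
  have singleton: "{grid_vec d s k} \<in> sets (vec_space d)"
    unfolding vec_space_def by (intro singleton_sets_PiM) (auto simp: grid_vec_def)
  have profile: "(\<lambda>a. input_profile n a (grid_vec d s k)) \<in> measurable (vec_space d) (inputs_space d n)"
    unfolding input_profile_def inputs_space_def by (intro measurable_restrict) auto
  have "(\<integral>\<^sup>+z. F z \<partial>joint n ?D) = (\<integral>\<^sup>+x. ?G x \<partial>PiM {..<n} ?D)"
    unfolding joint_def by (rule coins.nn_integral_fst[OF F', symmetric])
  also have "\<dots> = (\<integral>\<^sup>+a. ?G (input_profile n a (grid_vec d s k)) \<partial>?D 0)"
    using assms(1) singleton G hard_input_nonzero
    by (intro nn_integral_PiM_return_except_zero)
       (simp_all add: hard_input_def prob_space.prob_space_distr prob_space_measure_pmf)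
  also have "\<dots> = (\<integral>\<^sup>+t. ?G (input_profile n (grid_vec d s t) (grid_vec d s k))
                      \<partial>measure_pmf (pmf_of_set (int_box d k m)))"
    unfolding hard_input_def using measurable_comp[OF profile coins.borel_measurable_nn_integral_fst[OF F]]
    by (simp add: nn_integral_distr comp_def)
  also have "\<dots> = (\<Sum>t\<in>int_box d k m. ?G (input_profile n (grid_vec d s t) (grid_vec d s k)))
                   / card (int_box d k m)"
    by (simp add: nn_integral_pmf_of_set)
  finally show ?thesis .
qed

lemma emeasure_joint_hard_input:
  assumes "n \<ge> 1" "A \<in> sets (inputs_space d n \<Otimes>\<^sub>M coins)"
  shows "of_nat ((2 * m + 1) ^ d) * emeasure (joint n (hard_input d s m k)) A
    = (\<Sum>t\<in>int_box d k m. \<integral>\<^sup>+\<omega>. indicator A (input_profile n (grid_vec d s t) (grid_vec d s k), \<omega>) \<partial>coins)"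
proof -
  have "emeasure (joint n (hard_input d s m k)) A = (\<integral>\<^sup>+z. indicator A z \<partial>joint n (hard_input d s m k))"
    using assms(2) by (simp add: sets_joint_hard_input)
  also have "\<dots> = (\<Sum>t\<in>int_box d k m.
      \<integral>\<^sup>+\<omega>. indicator A (input_profile n (grid_vec d s t) (grid_vec d s k), \<omega>) \<partial>coins) / of_nat ((2 * m + 1) ^ d)"
    using nn_integral_joint_hard_input[OF assms(1) borel_measurable_indicator[OF assms(2)]]
    by (simp add: card_int_box)
  finally show ?thesis
    by (simp add: ennreal_times_divide mult.commute[of "of_nat _"] ennreal_mult_divide_eq del: of_nat_power)
qed

section \<open>Short messages cannot locate many grid points\<close>

definition short_and_close :: "normkind \<Rightarrow> nat \<Rightarrow> nat
    \<Rightarrow> ((nat \<Rightarrow> nat \<Rightarrow> real) \<Rightarrow> (nat \<Rightarrow> bool) \<Rightarrow> nat \<Rightarrow> real)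
    \<Rightarrow> (nat \<Rightarrow> (nat \<Rightarrow> nat \<Rightarrow> real) \<Rightarrow> (nat \<Rightarrow> bool) \<Rightarrow> bool list)
    \<Rightarrow> nat \<Rightarrow> real \<Rightarrow> (nat \<Rightarrow> real) \<Rightarrow> ((nat \<Rightarrow> nat \<Rightarrow> real) \<times> (nat \<Rightarrow> bool)) set" where
  "short_and_close p d n EST Msg L r g = {z \<in> space (inputs_space d n \<Otimes>\<^sub>M coins).
     length (Msg 0 (fst z) (snd z)) \<le> L \<and> vnorm p d (\<lambda>i. EST (fst z) (snd z) i - g i) < r}"

lemma sets_short_and_close:
  assumes "\<And>i. i < d \<Longrightarrow> (\<lambda>z. EST (fst z) (snd z) i) \<in> borel_measurable (inputs_space d n \<Otimes>\<^sub>M coins)"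
    and "(\<lambda>z. Msg 0 (fst z) (snd z)) \<in> measurable (inputs_space d n \<Otimes>\<^sub>M coins) (count_space UNIV)"
  shows "short_and_close p d n EST Msg L r g \<in> sets (inputs_space d n \<Otimes>\<^sub>M coins)"
proof -
  have "(\<lambda>z. length (Msg 0 (fst z) (snd z))) \<in> measurable (inputs_space d n \<Otimes>\<^sub>M coins) (count_space UNIV)"
    using assms(2) by (rule measurable_compose) simp
  then show ?thesis
    unfolding short_and_close_def using assms(1) by measurable
qed

lemma sum_card_le_by_witnesses:
  fixes B :: "'k \<Rightarrow> 't set" and R :: "'t \<Rightarrow> 's \<Rightarrow> 'k \<Rightarrow> bool"
  assumes "finite G" "finite T" "finite S"
    and B: "\<And>k. k \<in> G \<Longrightarrow> B k \<subseteq> T"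
    and witness: "\<And>k t. k \<in> G \<Longrightarrow> t \<in> B k \<Longrightarrow> P k t \<Longrightarrow> \<exists>s\<in>S. R t s k"
    and C: "\<And>t s. t \<in> T \<Longrightarrow> s \<in> S \<Longrightarrow> real (card {k \<in> G. R t s k}) \<le> C"
  shows "real (\<Sum>k\<in>G. card {t \<in> B k. P k t}) \<le> real (card T) * real (card S) * C"
proof -
  let ?Q = "\<lambda>k t. \<exists>s\<in>S. R t s k"
  have "(\<Sum>k\<in>G. card {t \<in> B k. P k t}) \<le> (\<Sum>k\<in>G. card {t \<in> T. ?Q k t})"
    using assms(2) B witness by (intro sum_mono card_mono) auto
  also have "\<dots> = (\<Sum>k\<in>G. \<Sum>t\<in>T. if ?Q k t then 1 else 0)"
    using assms(2) by (simp add: sum.inter_filter[symmetric])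
  also have "\<dots> = (\<Sum>t\<in>T. \<Sum>k\<in>G. if ?Q k t then 1 else 0)"
    by (rule sum.swap)
  also have "\<dots> = (\<Sum>t\<in>T. card (\<Union>s\<in>S. {k \<in> G. R t s k}))"
    using assms(1) by (simp add: sum.inter_filter[symmetric]) (intro sum.cong arg_cong[where f = card]; auto)
  also have "\<dots> \<le> (\<Sum>t\<in>T. \<Sum>s\<in>S. card {k \<in> G. R t s k})"
    using assms(3) by (intro sum_mono card_UN_le)
  finally have "real (\<Sum>k\<in>G. card {t \<in> B k. P k t}) \<le> (\<Sum>t\<in>T. \<Sum>s\<in>S. real (card {k \<in> G. R t s k}))"
    by (simp flip: of_nat_sum)
  also have "\<dots> \<le> (\<Sum>t\<in>T. \<Sum>s\<in>S. C)"
    using C by (intro sum_mono) auto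
  finally show ?thesis by simp
qed

lemma card_bool_lists_length_le: "card {s :: bool list. length s \<le> L} < 2 ^ (L + 1)"
proof -
  have "card {s :: bool list. length s \<le> L} = (\<Sum>i\<le>L. 2 ^ i)"
    using card_lists_length_le[of "UNIV :: bool set" L] by simp
  also have "(\<Sum>i\<le>L. (2::nat) ^ i) < 2 ^ (L + 1)"
    by (induction L) auto
  finally show ?thesis .
qed

text \<open>Machine 0 outputs a function of its own input, the shared coins and its message. So for
  fixed coins, an input \<open>t\<close> and a message of at most \<open>L\<close> bits determine one output point, and it
  lies within distance \<open>r\<close> of at most \<open>C\<close> of the candidate true vectors.\<close>

lemma card_short_and_close_profiles_le:
  fixes G T :: "(nat \<Rightarrow> int) set"
  assumes "n \<ge> 1" and view: "local_view d n EST Msg Out"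
    and "finite G" "finite T" and box: "\<And>k. k \<in> G \<Longrightarrow> int_box d k m \<subseteq> T"
    and ball: "\<And>a. real (card {k \<in> G. vnorm p d (\<lambda>i. a i - grid_vec d s k i) < r}) \<le> C"
  shows "real (\<Sum>k\<in>G. card {t \<in> int_box d k m. (input_profile n (grid_vec d s t) (grid_vec d s k), \<omega>)
             \<in> short_and_close p d n EST Msg L r (grid_vec d s k)})
    \<le> real (card T) * 2 ^ (L + 1) * C"
proof -
  let ?S = "{w :: bool list. length w \<le> L}"
  let ?x = "\<lambda>k t. input_profile n (grid_vec d s t) (grid_vec d s k)"
  let ?near = "\<lambda>t w k. vnorm p d (\<lambda>i. Out 0 (grid_vec d s t) \<omega> w i - grid_vec d s k i) < r"
  have "\<forall>x\<in>space (inputs_space d n). \<forall>\<omega> i. i < d \<longrightarrow> EST x \<omega> i = Out 0 (x 0) \<omega> (Msg 0 x \<omega>) i"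
    using view \<open>n \<ge> 1\<close> unfolding local_view_def by simp
  moreover have "?x k t \<in> space (inputs_space d n)" for k t
    by (simp add: input_profile_def inputs_space_def space_PiM)
  ultimately have "EST (?x k t) \<omega> i = Out 0 (?x k t 0) \<omega> (Msg 0 (?x k t) \<omega>) i" if "i < d" for k t i
    using that by blast
  then have "EST (?x k t) \<omega> i = Out 0 (grid_vec d s t) \<omega> (Msg 0 (?x k t) \<omega>) i" if "i < d" for k t i
    using that \<open>n \<ge> 1\<close> by (simp add: input_profile_def)
  then have "real (\<Sum>k\<in>G. card {t \<in> int_box d k m. (?x k t, \<omega>) \<in> short_and_close p d n EST Msg L r (grid_vec d s k)})
      \<le> real (card T) * real (card ?S) * C"
    using \<open>finite G\<close> \<open>finite T\<close> box ball finite_lists_length_le[of "UNIV :: bool set" L]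
    by (intro sum_card_le_by_witnesses[where R = ?near])
       (auto simp: short_and_close_def cong: vnorm_cong)
  also have "\<dots> \<le> real (card T) * 2 ^ (L + 1) * C"
  proof -
    have "C \<ge> 0" using ball[of undefined] by linarith
    moreover have "real (card ?S) < 2 ^ (L + 1)"
      using card_bool_lists_length_le[of L] by (metis of_nat_less_iff of_nat_numeral of_nat_power)
    ultimately show ?thesis by (intro mult_right_mono mult_left_mono) simp_all
  qed
  finally show ?thesis .
qed

lemma sum_prob_short_and_close_le:
  fixes G T :: "(nat \<Rightarrow> int) set"
  assumes "n \<ge> 1" and view: "local_view d n EST Msg Out"
    and EST: "\<And>i. i < d \<Longrightarrow> (\<lambda>z. EST (fst z) (snd z) i) \<in> borel_measurable (inputs_space d n \<Otimes>\<^sub>M coins)"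
    and Msg: "(\<lambda>z. Msg 0 (fst z) (snd z)) \<in> measurable (inputs_space d n \<Otimes>\<^sub>M coins) (count_space UNIV)"
    and "finite G" "finite T" and box: "\<And>k. k \<in> G \<Longrightarrow> int_box d k m \<subseteq> T"
    and ball: "\<And>a. real (card {k \<in> G. vnorm p d (\<lambda>i. a i - grid_vec d s k i) < r}) \<le> C"
  shows "real ((2 * m + 1) ^ d)
      * (\<Sum>k\<in>G. measure (joint n (hard_input d s m k)) (short_and_close p d n EST Msg L r (grid_vec d s k)))
    \<le> real (card T) * 2 ^ (L + 1) * C"
proof -
  let ?J = "\<lambda>k. joint n (hard_input d s m k)"
  let ?A = "\<lambda>k. short_and_close p d n EST Msg L r (grid_vec d s k)"
  let ?hit = "\<lambda>k t \<omega>. indicator (?A k) (input_profile n (grid_vec d s t) (grid_vec d s k), \<omega>) :: ennreal"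
  let ?bound = "real (card T) * 2 ^ (L + 1) * C"
  have A: "?A k \<in> sets (inputs_space d n \<Otimes>\<^sub>M coins)" for k
    by (rule sets_short_and_close[where EST = EST and Msg = Msg, OF EST Msg])
  have hit: "?hit k t \<in> borel_measurable coins" for k t
    by (rule measurable_Pair2[OF borel_measurable_indicator[OF A]])
       (simp add: input_profile_def inputs_space_def space_PiM)
  have pointwise: "(\<Sum>k\<in>G. \<Sum>t\<in>int_box d k m. ?hit k t \<omega>) \<le> ennreal ?bound" for \<omega>
    using card_short_and_close_profiles_le[OF assms(1,2,5,6) box ball, of \<omega> L]
    by (simp add: indicator_def sum.inter_filter[symmetric] Int_def ennreal_of_nat_eq_real_of_nat
        ennreal_leI flip: of_nat_sum)
  have "ennreal (real ((2 * m + 1) ^ d) * (\<Sum>k\<in>G. measure (?J k) (?A k)))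
      = (\<Sum>k\<in>G. of_nat ((2 * m + 1) ^ d) * emeasure (?J k) (?A k))"
    by (simp add: sum_distrib_left ennreal_mult ennreal_of_nat_eq_real_of_nat
        finite_measure.emeasure_eq_measure[OF prob_space.axioms(1)[OF prob_space_joint_hard_input]]
        flip: sum_ennreal del: of_nat_power)
  also have "\<dots> = (\<Sum>k\<in>G. \<Sum>t\<in>int_box d k m. \<integral>\<^sup>+\<omega>. ?hit k t \<omega> \<partial>coins)"
    by (simp only: emeasure_joint_hard_input[OF assms(1) A])
  also have "\<dots> = (\<integral>\<^sup>+\<omega>. (\<Sum>k\<in>G. \<Sum>t\<in>int_box d k m. ?hit k t \<omega>) \<partial>coins)"
    using hit by (simp add: nn_integral_sum borel_measurable_sum)
  also have "\<dots> \<le> (\<integral>\<^sup>+\<omega>. ennreal ?bound \<partial>coins)"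
    by (intro nn_integral_mono pointwise)
  also have "\<dots> = ennreal ?bound"
    by (simp add: prob_space.emeasure_space_1[OF prob_space_coins])
  finally have "ennreal (real ((2 * m + 1) ^ d) * (\<Sum>k\<in>G. measure (?J k) (?A k))) \<le> ennreal ?bound" .
  moreover have "C \<ge> 0"
    using ball[of undefined] by (meson of_nat_0_le_iff order_trans)
  ultimately show ?thesis
    by (simp add: ennreal_le_iff)
qed

section \<open>Markov bounds and the choice of parameters\<close>

lemma (in prob_space) prob_ge_Markov:
  assumes [measurable]: "f \<in> borel_measurable M" and "0 \<le> c"
  shows "ennreal (c * prob {x \<in> space M. c \<le> f x}) \<le> (\<integral>\<^sup>+x. ennreal (f x) \<partial>M)"
proof -
  have "ennreal (c * prob {x \<in> space M. c \<le> f x})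
      = (\<integral>\<^sup>+x. ennreal c * indicator {x \<in> space M. c \<le> f x} x \<partial>M)"
    using assms(2) by (simp add: nn_integral_cmult_indicator emeasure_eq_measure ennreal_mult)
  also have "\<dots> \<le> (\<integral>\<^sup>+x. ennreal (f x) \<partial>M)"
    by (intro nn_integral_mono) (auto simp: indicator_def ennreal_leI)
  finally show ?thesis .
qed

lemma (in prob_space) prob_short_and_close_gt:
  fixes len :: "'a \<Rightarrow> nat" and e :: "'a \<Rightarrow> real"
  assumes [measurable]: "len \<in> measurable M (count_space UNIV)" "e \<in> borel_measurable M"
    and len_bound: "(\<integral>\<^sup>+z. of_nat (len z) \<partial>M) \<le> ennreal b" "0 \<le> b"
    and error: "(\<integral>\<^sup>+z. ennreal ((e z)\<^sup>2) \<partial>M) < ennreal B" and "0 < r"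
  shows "1 - b / (real L + 1) - B / r\<^sup>2 < prob {z \<in> space M. len z \<le> L \<and> e z < r}"
proof -
  define long where "long = {z \<in> space M. real L + 1 \<le> real (len z)}"
  define far where "far = {z \<in> space M. r\<^sup>2 \<le> (e z)\<^sup>2}"
  define good where "good = {z \<in> space M. len z \<le> L \<and> e z < r}"
  have [measurable]: "long \<in> events" "far \<in> events" "good \<in> events"
    unfolding long_def far_def good_def by measurable
  have "ennreal ((real L + 1) * prob long) \<le> (\<integral>\<^sup>+z. ennreal (real (len z)) \<partial>M)"
    unfolding long_def by (rule prob_ge_Markov) auto
  also have "\<dots> \<le> ennreal b"
    using len_bound(1) by (simp add: ennreal_of_nat_eq_real_of_nat)
  finally have "(real L + 1) * prob long \<le> b"
    using len_bound(2) by (simp only: ennreal_le_iff)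
  then have prob_long: "prob long \<le> b / (real L + 1)"
    by (simp add: field_simps)
  have "ennreal (r\<^sup>2 * prob far) \<le> (\<integral>\<^sup>+z. ennreal ((e z)\<^sup>2) \<partial>M)"
    unfolding far_def by (rule prob_ge_Markov) auto
  also have "\<dots> < ennreal B" by (rule error)
  finally have "r\<^sup>2 * prob far < B"
    by (simp add: ennreal_less_iff)
  then have prob_far: "prob far < B / r\<^sup>2"
    using \<open>0 < r\<close> by (simp add: field_simps)
  have "space M \<subseteq> long \<union> good \<union> far"
  proof
    fix z assume "z \<in> space M"
    moreover have "r\<^sup>2 \<le> (e z)\<^sup>2" if "r \<le> e z" using that \<open>0 < r\<close> by (intro power_mono) auto
    ultimately show "z \<in> long \<union> good \<union> far"
      by (cases "len z \<le> L"; cases "e z < r") (auto simp: long_def good_def far_def)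
  qed
  then have "1 \<le> prob (long \<union> good \<union> far)"
    using prob_space by (metis finite_measure_mono sets.Un \<open>long \<in> events\<close> \<open>good \<in> events\<close> \<open>far \<in> events\<close>)
  also have "\<dots> \<le> prob long + prob good + prob far"
    by (intro order.trans[OF measure_Un_le] add_right_mono measure_Un_le) auto
  finally show ?thesis
    using prob_long prob_far unfolding good_def by linarith
qed

lemma one_plus_inverse_power_le_exp_1: "d \<ge> 1 \<Longrightarrow> (1 + 1 / real d) ^ d \<le> exp 1"
proof -
  assume "d \<ge> 1"
  have "(1 + 1 / real d) ^ d \<le> exp (1 / real d) ^ d"
    by (intro power_mono exp_ge_add_one_self) auto
  also have "\<dots> = exp 1"
    using \<open>d \<ge> 1\<close> by (simp add: exp_of_nat_mult[symmetric])
  finally show ?thesis .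
qed

lemma counting_parameters_inequality:
  fixes d m :: nat and X \<kappa> :: real
  assumes "d \<ge> 1" "\<kappa> > 0" "\<kappa> ^ d * (18 * X) = 1" "2 * exp 1 \<le> real m * \<kappa>"
  shows "X * real (2 * m * d + 2 * m) ^ d * (2 * exp 1 * (1 + \<kappa> / (4 * exp 1) * real m)) ^ d
         \<le> real (2 * m + 1) ^ d * real (2 * m * d) ^ d / 6"
proof -
  have X: "X > 0" using assms(2,3) by (metis zero_less_mult_pos zero_less_numeral zero_less_one zero_less_power)
  have "real (2 * m * d + 2 * m) = real (2 * m * d) * (1 + 1 / real d)"
    using assms(1) by (simp add: field_simps)
  then have "real (2 * m * d + 2 * m) ^ d = real (2 * m * d) ^ d * (1 + 1 / real d) ^ d"
    by (simp only: power_mult_distrib)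
  also have "\<dots> \<le> real (2 * m * d) ^ d * 3"
    using one_plus_inverse_power_le_exp_1[OF assms(1)] exp_le by (intro mult_left_mono) auto
  finally have grid: "real (2 * m * d + 2 * m) ^ d \<le> real (2 * m * d) ^ d * 3" .
  have "2 * exp 1 * (1 + \<kappa> / (4 * exp 1) * real m) = 2 * exp 1 + real m * \<kappa> / 2"
    by (simp add: field_simps)
  also have "\<dots> \<le> real (2 * m + 1) * \<kappa>"
  proof -
    have "real (2 * m + 1) * \<kappa> = 2 * (real m * \<kappa>) + \<kappa>" by (simp add: algebra_simps)
    then show ?thesis using assms(2,4) exp_gt_zero[of 1] by linarith
  qed
  finally have ball: "(2 * exp 1 * (1 + \<kappa> / (4 * exp 1) * real m)) ^ d \<le> (real (2 * m + 1) * \<kappa>) ^ d"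
    using assms(2) by (intro power_mono) (simp_all add: add_nonneg_nonneg)
  have "X * real (2 * m * d + 2 * m) ^ d * (2 * exp 1 * (1 + \<kappa> / (4 * exp 1) * real m)) ^ d
      \<le> X * (real (2 * m * d) ^ d * 3) * (real (2 * m + 1) * \<kappa>) ^ d"
    using X grid ball assms(2) by (intro mult_mono mult_left_mono) (auto intro!: zero_le_power)
  also have "\<dots> = real (2 * m + 1) ^ d * real (2 * m * d) ^ d * (\<kappa> ^ d * (18 * X)) / 6"
    by (simp only: power_mult_distrib) simp
  also have "\<dots> = real (2 * m + 1) ^ d * real (2 * m * d) ^ d / 6"
    using assms(3) by simp
  finally show ?thesis .
qed

lemma powr_neg_inverse_power:
  fixes y :: real
  assumes "y > 0" "d \<ge> 1"
  shows "(y powr (- 1 / real d)) ^ d = inverse y"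
proof -
  have "(y powr (- 1 / real d)) ^ d = y powr (- 1 / real d * real d)"
    using assms(1) by (simp add: powr_realpow[symmetric] powr_powr)
  also have "\<dots> = inverse y"
    using assms by (simp add: powr_minus)
  finally show ?thesis .
qed

lemma two_powr_neg_bits_le:
  fixes b X :: real
  assumes "d \<ge> 1" "0 < X" "X \<le> 2 * 2 powr (3 * b / 2)"
  shows "2 powr (- 3 * b / real d) / 1296 \<le> (18 * X) powr (- 2 / real d)"
proof -
  have "2 powr (- 3 * b / real d) / 1296 \<le> 36 powr (- 2 / real d) * 2 powr (- 3 * b / real d)"
  proof -
    have "(36::real) powr (- 2) \<le> 36 powr (- 2 / real d)"
      using assms(1) by (intro powr_mono) (auto simp: field_simps)
    then show ?thesis by (simp add: powr_minus powr_numeral)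
  qed
  also have "\<dots> = (36 * 2 powr (3 * b / 2)) powr (- 2 / real d)"
    by (simp add: powr_mult powr_powr)
  also have "\<dots> \<le> (18 * X) powr (- 2 / real d)"
    using assms(2,3) by (intro powr_mono2') auto
  finally show ?thesis .
qed

lemma nat_ceiling_divide_ge:
  fixes a \<kappa> :: real
  assumes "0 < a" "0 < \<kappa>"
  shows "nat \<lceil>a / \<kappa>\<rceil> \<ge> 1" "a \<le> real (nat \<lceil>a / \<kappa>\<rceil>) * \<kappa>"
proof -
  have "a / \<kappa> > 0" and ceiling: "real (nat \<lceil>a / \<kappa>\<rceil>) \<ge> a / \<kappa>"
    using assms by simp_all
  then show "nat \<lceil>a / \<kappa>\<rceil> \<ge> 1"
    by linarith
  show "a \<le> real (nat \<lceil>a / \<kappa>\<rceil>) * \<kappa>"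
    using ceiling pos_divide_le_eq[OF assms(2)] by blast
qed

text \<open>The choice of parameters: \<open>L = \<lfloor>3b/2\<rfloor>\<close>, \<open>\<kappa>\<^sup>d \<cdot> 18 \<cdot> 2\<^bsup>L+1\<^esup> = 1\<close>,
  \<open>m = \<lceil>2e/\<kappa>\<rceil>\<close> and \<open>\<rho> = \<kappa>/(4e)\<close>; the constant \<open>1119744 = 36\<^sup>2 \<cdot> 96 \<cdot> 9\<close> absorbs
  \<open>36\<^bsup>-2/d\<^esup> \<ge> 36\<^sup>-\<^sup>2\<close> and \<open>e\<^sup>2 \<le> 9\<close>.\<close>

lemma hard_parameters:
  fixes b :: real
  assumes "d \<ge> 1" "b \<ge> 0"
  obtains L m :: nat and \<rho> :: real where "m \<ge> 1" "\<rho> > 0" "b / (real L + 1) \<le> 2 / 3"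
    "2 ^ (L + 1) * real (2 * m * d + 2 * m) ^ d * (2 * exp 1 * (1 + \<rho> * real m)) ^ d
       \<le> real (2 * m + 1) ^ d * real (2 * m * d) ^ d / 6"
    "2 powr (- 3 * b / real d) / 1119744 \<le> \<rho>\<^sup>2 / 6"
proof -
  define L where "L = nat \<lfloor>3 * b / 2\<rfloor>"
  define X :: real where "X = 2 ^ (L + 1)"
  define \<kappa> where "\<kappa> = (18 * X) powr (- 1 / real d)"
  define m where "m = nat \<lceil>2 * exp 1 / \<kappa>\<rceil>"
  have L: "real L \<le> 3 * b / 2" "3 * b / 2 < real L + 1"
    using assms(2) by (simp_all add: L_def) linarith+
  have X: "X = 2 * 2 powr real L"
    by (simp add: X_def powr_realpow)
  then have X_bound: "0 < X" "X \<le> 2 * 2 powr (3 * b / 2)"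
    using L(1) by (simp_all add: powr_mono)
  have "\<kappa> ^ d = inverse (18 * X)"
    unfolding \<kappa>_def using X_bound(1) assms(1) by (intro powr_neg_inverse_power) simp_all
  then have \<kappa>: "\<kappa> > 0" "\<kappa> ^ d * (18 * X) = 1"
    using X_bound(1) by (simp add: \<kappa>_def, simp only: left_inverse)
  have m: "m \<ge> 1" "2 * exp 1 \<le> real m * \<kappa>"
    unfolding m_def using nat_ceiling_divide_ge[OF _ \<kappa>(1), of "2 * exp 1"] by simp_all
  have "2 powr (- 3 * b / real d) / 1296 \<le> \<kappa>\<^sup>2"
    using two_powr_neg_bits_le[OF assms(1) X_bound] X_bound(1)
    by (simp add: \<kappa>_def powr_realpow[symmetric] powr_powr)
  moreover have "\<kappa>\<^sup>2 / 864 \<le> (\<kappa> / (4 * exp 1))\<^sup>2 / 6"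
  proof -
    have "(exp 1)\<^sup>2 \<le> (9::real)"
      using power_mono[OF exp_le, of 2] by simp
    then have "\<kappa>\<^sup>2 * (exp 1)\<^sup>2 \<le> 9 * \<kappa>\<^sup>2"
      by (metis mult.commute mult_left_mono zero_le_power2)
    then show ?thesis
      by (simp add: power_divide power_mult_distrib field_simps)
  qed
  moreover have "b / (real L + 1) \<le> 2 / 3"
    using L(2) assms(2) by (simp add: field_simps)
  moreover have "2 ^ (L + 1) * real (2 * m * d + 2 * m) ^ d * (2 * exp 1 * (1 + \<kappa> / (4 * exp 1) * real m)) ^ d
      \<le> real (2 * m + 1) ^ d * real (2 * m * d) ^ d / 6"
    using counting_parameters_inequality[OF assms(1) \<kappa> m(2)] by (simp add: X_def)
  ultimately show ?thesis
    using that[of m "\<kappa> / (4 * exp 1)" L] m \<kappa>(1) by simp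
qed

lemma prob_short_and_close_hard_input_gt:
  assumes EST: "\<And>i. i < d \<Longrightarrow> (\<lambda>z. EST (fst z) (snd z) i) \<in> borel_measurable (inputs_space d n \<Otimes>\<^sub>M coins)"
    and Msg: "(\<lambda>z. Msg 0 (fst z) (snd z)) \<in> measurable (inputs_space d n \<Otimes>\<^sub>M coins) (count_space UNIV)"
    and len: "(\<integral>\<^sup>+z. of_nat (length (Msg 0 (fst z) (snd z))) \<partial>joint n (hard_input d s m k)) \<le> ennreal b"
    and "0 \<le> b" "0 < r"
    and err: "(\<integral>\<^sup>+z. ennreal ((vnorm p d (\<lambda>i. EST (fst z) (snd z) i - grid_vec d s k i))\<^sup>2)
               \<partial>joint n (hard_input d s m k)) < ennreal B"
  shows "1 - b / (real L + 1) - B / r\<^sup>2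
    < measure (joint n (hard_input d s m k)) (short_and_close p d n EST Msg L r (grid_vec d s k))"
proof -
  let ?J = "joint n (hard_input d s m k)"
  interpret J: prob_space ?J by (rule prob_space_joint_hard_input)
  have meas: "f \<in> measurable (inputs_space d n \<Otimes>\<^sub>M coins) N \<Longrightarrow> f \<in> measurable ?J N" for f N
    by (simp add: measurable_cong_sets[OF sets_joint_hard_input refl])
  have "(\<lambda>z. length (Msg 0 (fst z) (snd z))) \<in> measurable ?J (count_space UNIV)"
    by (rule meas, rule measurable_compose[OF Msg]) simp
  moreover have "(\<lambda>z. vnorm p d (\<lambda>i. EST (fst z) (snd z) i - grid_vec d s k i)) \<in> borel_measurable ?J"
    using EST by (intro borel_measurable_vnorm borel_measurable_diff meas) auto
  ultimately show ?thesis
    using J.prob_short_and_close_gt[OF _ _ len \<open>0 \<le> b\<close> err \<open>0 < r\<close>, of L]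
    by (simp add: short_and_close_def sets_eq_imp_space_eq[OF sets_joint_hard_input])
qed

lemma borel_measurable_unbiased_estimate:
  assumes "unbiased p d n \<sigma> EST" "i < d"
    and "valid_input p d n \<sigma> (grid_vec d s k) (hard_input d s m k)"
  shows "(\<lambda>z. EST (fst z) (snd z) i) \<in> borel_measurable (inputs_space d n \<Otimes>\<^sub>M coins)"
proof -
  have "integrable (joint n (hard_input d s m k)) (\<lambda>z. EST (fst z) (snd z) i)"
    using assms unfolding unbiased_def by blast
  then have "(\<lambda>z. EST (fst z) (snd z) i) \<in> borel_measurable (joint n (hard_input d s m k))"
    by (rule borel_measurable_integrable)
  then show ?thesis
    by (simp add: measurable_cong_sets[OF sets_joint_hard_input refl])
qed

lemma sum_prob_short_and_close_grid_le:
  fixes L m :: nat and \<rho> s r :: real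
  assumes "n \<ge> 1" "d \<ge> 1" and view: "local_view d n EST Msg Out"
    and EST: "\<And>i. i < d \<Longrightarrow> (\<lambda>z. EST (fst z) (snd z) i) \<in> borel_measurable (inputs_space d n \<Otimes>\<^sub>M coins)"
    and Msg: "(\<lambda>z. Msg 0 (fst z) (snd z)) \<in> measurable (inputs_space d n \<Otimes>\<^sub>M coins) (count_space UNIV)"
    and "s > 0" "r > 0" and scale: "l1_factor p d * r / (s * real d) = \<rho> * real m"
    and count: "2 ^ (L + 1) * real (2 * m * d + 2 * m) ^ d * (2 * exp 1 * (1 + \<rho> * real m)) ^ d
      \<le> real (2 * m + 1) ^ d * real (2 * m * d) ^ d / 6"
  shows "(\<Sum>k\<in>PiE {..<d} (\<lambda>_. {0..<int (2 * m * d)}).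
      measure (joint n (hard_input d s m k)) (short_and_close p d n EST Msg L r (grid_vec d s k)))
    \<le> real (2 * m * d) ^ d / 6"
proof -
  define N where "N = 2 * m * d"
  define G where "G = PiE {..<d} (\<lambda>_. {0..<int N})"
  define T where "T = PiE {..<d} (\<lambda>_. {- int m..int N - 1 + int m})"
  let ?P = "\<Sum>k\<in>G. measure (joint n (hard_input d s m k)) (short_and_close p d n EST Msg L r (grid_vec d s k))"
  have "card {- int m..int N - 1 + int m} = N + 2 * m" "card {0..<int N} = N"
    by simp_all
  then have card: "card T = (2 * m * d + 2 * m) ^ d" "card G = (2 * m * d) ^ d"
    by (simp_all add: T_def G_def card_PiE N_def)
  have "real ((2 * m + 1) ^ d) * ?P \<le> real (card T) * 2 ^ (L + 1) * (2 * exp 1 * (1 + \<rho> * real m)) ^ d"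
  proof (rule sum_prob_short_and_close_le[OF assms(1) view EST Msg])
    show "finite G" "finite T" by (simp_all add: G_def T_def finite_PiE)
    show "int_box d k m \<subseteq> T" if "k \<in> G" for k
      using that by (force simp: G_def T_def int_box_def PiE_iff)
    show "real (card {k \<in> G. vnorm p d (\<lambda>i. a i - grid_vec d s k i) < r})
        \<le> (2 * exp 1 * (1 + \<rho> * real m)) ^ d" for a
      using card_grid_vnorm_ball_le[OF _ assms(2,6,7), of "{0..<int N}" p a] scale
      by (simp add: G_def)
  qed
  also have "\<dots> \<le> real ((2 * m + 1) ^ d) * (real (card G) / 6)"
    using count card by (simp add: mult_ac)
  finally have "?P \<le> real (card G) / 6"
    by (simp add: mult_le_cancel_left_pos del: of_nat_power)
  then show ?thesis
    using card(2) by (simp add: G_def N_def)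
qed

lemma exists_valid_input_with_large_error:
  fixes b :: real
  assumes "d \<ge> 1" "n \<ge> 1" "\<sigma> > 0" "b \<ge> 0" and unbiased: "unbiased p d n \<sigma> EST"
    and view: "local_view d n EST Msg Out" and bits: "bits_bound p d n \<sigma> b Msg"
  shows "\<exists>g D. valid_input p d n \<sigma> g D \<and>
    ennreal (1 / 1119744 * \<sigma>\<^sup>2 * 2 powr (- 3 * b / real d))
      \<le> (\<integral>\<^sup>+z. ennreal ((vnorm p d (\<lambda>i. EST (fst z) (snd z) i - g i))\<^sup>2) \<partial>joint n D)"
proof (rule ccontr)
  define B where "B = \<sigma>\<^sup>2 * 2 powr (- 3 * b / real d) / 1119744"
  assume "\<not> ?thesis"
  then have small_error: "(\<integral>\<^sup>+z. ennreal ((vnorm p d (\<lambda>i. EST (fst z) (snd z) i - g i))\<^sup>2) \<partial>joint n D)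
      < ennreal B" if "valid_input p d n \<sigma> g D" for g D
    using that by (auto simp: B_def not_le)
  obtain L m \<rho> where "m \<ge> 1" "\<rho> > 0" and L: "b / (real L + 1) \<le> 2 / 3"
    and count: "2 ^ (L + 1) * real (2 * m * d + 2 * m) ^ d * (2 * exp 1 * (1 + \<rho> * real m)) ^ d
       \<le> real (2 * m + 1) ^ d * real (2 * m * d) ^ d / 6"
    and \<rho>: "2 powr (- 3 * b / real d) / 1119744 \<le> \<rho>\<^sup>2 / 6"
    using hard_parameters[OF assms(1,4)] by blast
  define s where "s = \<sigma> / (real m * ones_norm p d)"
  define r where "r = \<sigma> * \<rho>"
  define G where "G = PiE {..<d} (\<lambda>_. {0..<int (2 * m * d)})"
  let ?P = "\<lambda>k. measure (joint n (hard_input d s m k)) (short_and_close p d n EST Msg L r (grid_vec d s k))"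
  have ones_norm: "ones_norm p d > 0" by (rule ones_norm_pos[OF assms(1)])
  have s: "s > 0" "ones_norm p d * s * real m = \<sigma>" "l1_factor p d * r / (s * real d) = \<rho> * real m"
    using assms(1,3) \<open>m \<ge> 1\<close> ones_norm ones_norm_mult_l1_factor[of p d]
    by (simp_all add: s_def r_def field_simps)
  have r: "r > 0" "B / r\<^sup>2 \<le> 1 / 6"
    using assms(3) \<open>\<rho> > 0\<close> \<rho> by (simp_all add: r_def B_def power_mult_distrib field_simps)
  have valid: "valid_input p d n \<sigma> (grid_vec d s k) (hard_input d s m k)" for k
    using valid_input_hard_input[OF assms(1)] s by simp
  have EST: "(\<lambda>z. EST (fst z) (snd z) i) \<in> borel_measurable (inputs_space d n \<Otimes>\<^sub>M coins)" if "i < d" for i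
    using borel_measurable_unbiased_estimate[OF unbiased that valid] .
  have Msg: "(\<lambda>z. Msg 0 (fst z) (snd z)) \<in> measurable (inputs_space d n \<Otimes>\<^sub>M coins) (count_space UNIV)"
    using bits assms(2) by (simp add: bits_bound_def)
  have "1 / 6 < ?P k" for k
  proof -
    have len: "(\<integral>\<^sup>+z. of_nat (length (Msg 0 (fst z) (snd z))) \<partial>joint n (hard_input d s m k)) \<le> ennreal b"
      using bits valid[of k] assms(2) by (simp add: bits_bound_def)
    have "1 - b / (real L + 1) - B / r\<^sup>2 < ?P k"
      by (rule prob_short_and_close_hard_input_gt[where EST = EST and Msg = Msg,
            OF EST Msg len \<open>b \<ge> 0\<close> \<open>r > 0\<close> small_error[OF valid]])
    then show ?thesis using L r(2) by linarith
  qed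
  then have "(\<Sum>k\<in>G. 1 / 6) < (\<Sum>k\<in>G. ?P k)"
    using \<open>m \<ge> 1\<close> assms(1) by (intro sum_strict_mono) (auto simp: G_def finite_PiE PiE_eq_empty_iff)
  moreover have "(\<Sum>k\<in>G. ?P k) \<le> real (2 * m * d) ^ d / 6"
    unfolding G_def by (rule sum_prob_short_and_close_grid_le[OF assms(2,1) view EST Msg s(1) r(1) s(3) count])
  ultimately show False
    by (simp add: G_def card_PiE)
qed

theorem theorem8:
  shows "\<exists>c>0. \<forall>p d n \<sigma> b EST Msg Out.
    d \<ge> 1 \<longrightarrow> n \<ge> 1 \<longrightarrow> \<sigma> > 0 \<longrightarrow> b \<ge> 0 \<longrightarrow>
    unbiased p d n \<sigma> EST \<longrightarrow> local_view d n EST Msg Out \<longrightarrow> bits_bound p d n \<sigma> b Msg \<longrightarrow>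
    (\<exists>g D. valid_input p d n \<sigma> g D \<and>
       ennreal (c * \<sigma>\<^sup>2 * 2 powr (- 3 * b / real d))
         \<le> (\<integral>\<^sup>+z. ennreal ((vnorm p d (\<lambda>i. EST (fst z) (snd z) i - g i))\<^sup>2) \<partial>joint n D))"
  using exists_valid_input_with_large_error by (intro exI[of _ "1 / 1119744"]) auto

end
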